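(* Consider a finite MDP $(\mathcal{S},\mathcal{A},P,r)$ with $r:\mathcal{S}\times\mathcal{A}\to[0,1]$ and discount factor $\gamma\in[0,1)$. Let $U,U'\in\mathbb{R}^{\mathcal{S}}$ satisfy $U\ge U'\ge V^*$ and, for all $s\in\mathcal{S}$ and $a\in\mathcal{A}$, $U(s)\ge r(s,a)+\gamma P_{s,a}U$ and $U'(s)\ge r(s,a)+\gamma P_{s,a}U'$. Let $\theta=\|U-V^*\|_\infty$. Then for every stationary policy $\pi$ and every $\tilde s\in\mathcal{S}$, \[ \sum_{s,a}\tilde d_\gamma^{\pi}(s,a\mid\tilde s)\,\mathbb{V}(P_{s,a},U-U')\ \le\ 4\theta^2+2\theta\big(V^*(\tilde s)-V^{\pi}(\tilde s)\big). \]
   Context: $P_{s,a}\in\Delta^{\mathcal{S}}$ is the transition distribution from $(s,a)$ and $P_{s,a}V=\sum_{s'}P(s'|s,a)V(s')$. For $p\in\Delta^{\mathcal{S}}$ and $x\in\mathbb{R}^{\mathcal{S}}$, $\mathbb{V}(p,x)=\sum_{s}p(s)x(s)^2-(\sum_s p(s)x(s))^2$. $V^*$ is the optimal $\gamma$-discounted value function, $V^{\pi}(\tilde s)=\mathbb{E}_\pi[\sum_{t\ge1}\gamma^{t-1}r(s_t,a_t)\mid s_1=\tilde s]$, and $\tilde d_\gamma^{\pi}(s,a\mid\tilde s)=\mathbb{E}_\pi\big[\sum_{t=1}^\infty\gamma^{t-1}\mathbb{I}[(s_t,a_t)=(s,a)]\mid s_1=\tilde s\big]$ with $a_t\sim\pi(\cdot|s_t)$,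 $s_{t+1}\sim P_{s_t,a_t}$. *)

theory Defs
  imports Complex_Main
begin

text \<open>Transition kernel P s a s' = P(s' | s, a), reward r s a, discount g.
  A stationary (possibly randomized) policy is \<pi> s a = \<pi>(a | s).\<close>

definition is_distr :: "('x::finite \<Rightarrow> real) \<Rightarrow> bool" where
  "is_distr p \<longleftrightarrow> (\<forall>x. 0 \<le> p x) \<and> (\<Sum>x\<in>UNIV. p x) = 1"

definition finite_mdp ::
  "('s::finite \<Rightarrow> 'a::finite \<Rightarrow> 's \<Rightarrow> real) \<Rightarrow> ('s \<Rightarrow> 'a \<Rightarrow> real) \<Rightarrow> real \<Rightarrow> bool" where
  "finite_mdp P r g \<longleftrightarrow> (\<forall>s a. is_distr (P s a)) \<and> (\<forall>s a. 0 \<le> r s a \<and> r s a \<le> 1)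
     \<and> 0 \<le> g \<and> g < 1"

definition stationary_policy :: "('s::finite \<Rightarrow> 'a::finite \<Rightarrow> real) \<Rightarrow> bool" where
  "stationary_policy \<pi> \<longleftrightarrow> (\<forall>s. is_distr (\<pi> s))"

definition PV :: "('s::finite \<Rightarrow> 'a \<Rightarrow> 's \<Rightarrow> real) \<Rightarrow> 's \<Rightarrow> 'a \<Rightarrow> ('s \<Rightarrow> real) \<Rightarrow> real" where
  "PV P s a V = (\<Sum>s'\<in>UNIV. P s a s' * V s')"

definition Var :: "('s::finite \<Rightarrow> real) \<Rightarrow> ('s \<Rightarrow> real) \<Rightarrow> real" where
  "Var p x = (\<Sum>s\<in>UNIV. p s * (x s)^2) - (\<Sum>s\<in>UNIV. p s * x s)^2"

text \<open>state_dist P \<pi> s0 n s = Pr_pi[s_{n+1} = s | s_1 = s0]\<close>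
fun state_dist :: "('s::finite \<Rightarrow> 'a::finite \<Rightarrow> 's \<Rightarrow> real) \<Rightarrow> ('s \<Rightarrow> 'a \<Rightarrow> real) \<Rightarrow> 's \<Rightarrow> nat \<Rightarrow> 's \<Rightarrow> real" where
  "state_dist P \<pi> s0 0 s = (if s = s0 then 1 else 0)"
| "state_dist P \<pi> s0 (Suc n) s' =
     (\<Sum>s\<in>UNIV. \<Sum>a\<in>UNIV. state_dist P \<pi> s0 n s * \<pi> s a * P s a s')"

definition occ :: "('s::finite \<Rightarrow> 'a::finite \<Rightarrow> 's \<Rightarrow> real) \<Rightarrow> real \<Rightarrow> ('s \<Rightarrow> 'a \<Rightarrow> real) \<Rightarrow> 's \<Rightarrow> 's \<Rightarrow> 'a \<Rightarrow> real" where
  "occ P g \<pi> s0 s a = (\<Sum>n. g ^ n * (state_dist P \<pi> s0 n s * \<pi> s a))"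

definition Vpi :: "('s::finite \<Rightarrow> 'a::finite \<Rightarrow> 's \<Rightarrow> real) \<Rightarrow> ('s \<Rightarrow> 'a \<Rightarrow> real) \<Rightarrow> real \<Rightarrow> ('s \<Rightarrow> 'a \<Rightarrow> real) \<Rightarrow> 's \<Rightarrow> real" where
  "Vpi P r g \<pi> s0 = (\<Sum>n. g ^ n * (\<Sum>s\<in>UNIV. \<Sum>a\<in>UNIV. state_dist P \<pi> s0 n s * \<pi> s a * r s a))"

text \<open>Optimal value function (supremum over stationary policies; for finite MDPs this
  coincides with the supremum over all history-dependent policies)\<close>
definition Vstar :: "('s::finite \<Rightarrow> 'a::finite \<Rightarrow> 's \<Rightarrow> real) \<Rightarrow> ('s \<Rightarrow> 'a \<Rightarrow> real) \<Rightarrow> real \<Rightarrow> 's \<Rightarrow> real" where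
  "Vstar P r g s0 = (SUP \<pi>\<in>{\<pi>. stationary_policy \<pi>}. Vpi P r g \<pi> s0)"

end

theory Submission
  imports Defs
begin

text \<open>Write \<open>D = U - U'\<close>, so \<open>0 \<le> D \<le> \<theta>\<close>. At a single pair \<open>(s, a)\<close> the variance of \<open>D\<close> under
  \<open>P\<^sub>s\<^sub>,\<^sub>a\<close> is at most \<open>(P\<^sub>s\<^sub>,\<^sub>a D\<^sup>2 - D(s)\<^sup>2) + 2\<theta> (U(s) - r(s,a) - \<gamma> P\<^sub>s\<^sub>,\<^sub>a U)\<close>: if \<open>D(s) \<le> P\<^sub>s\<^sub>,\<^sub>a D\<close> this
  is trivial, otherwise \<open>D(s)\<^sup>2 - (P\<^sub>s\<^sub>,\<^sub>a D)\<^sup>2 \<le> 2\<theta> (D(s) - \<gamma> P\<^sub>s\<^sub>,\<^sub>a D)\<close> and the Bellman inequality for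
  \<open>U'\<close> bounds the last factor by the Bellman residual of \<open>U\<close>. Integrating against the discounted
  occupancy measure, both terms telescope along the trajectory by the flow identity
  \<open>\<Sum> d(s,a) (f(s) - \<gamma> P\<^sub>s\<^sub>,\<^sub>a f) = f(s\<^sub>0)\<close>: the first, written as \<open>(1 - \<gamma>) P\<^sub>s\<^sub>,\<^sub>a D\<^sup>2 - (D\<^sup>2(s) - \<gamma> P\<^sub>s\<^sub>,\<^sub>a D\<^sup>2)\<close>,
  contributes at most \<open>\<theta>\<^sup>2\<close>, the second
  \<open>2\<theta> (U(s\<^sub>0) - V\<^sup>\<pi>(s\<^sub>0)) \<le> 2\<theta> (\<theta> + V\<^sup>*(s\<^sub>0) - V\<^sup>\<pi>(s\<^sub>0))\<close>.\<close>

lemma is_distr_le_one: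
  assumes "is_distr p"
  shows "p x \<le> 1"
proof -
  have "p x \<le> (\<Sum>y\<in>UNIV. p y)"
    using assms by (intro member_le_sum) (auto simp: is_distr_def)
  then show ?thesis
    using assms by (simp add: is_distr_def)
qed

lemma PV_const:
  assumes "is_distr (P s a)"
  shows "PV P s a (\<lambda>_. c) = c"
  using assms by (simp add: PV_def is_distr_def flip: sum_distrib_right)

lemma PV_nonneg:
  assumes "is_distr (P s a)" and "\<And>x. 0 \<le> f x"
  shows "0 \<le> PV P s a f"
  using assms unfolding PV_def is_distr_def by (auto intro!: sum_nonneg)

lemma PV_le_bound:
  assumes "is_distr (P s a)" and "\<And>x. f x \<le> c"
  shows "PV P s a f \<le> c"
proof -
  have "PV P s a f \<le> PV P s a (\<lambda>_. c)"
    using assms unfolding PV_def is_distr_def by (auto intro!: sum_mono mult_left_mono)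
  then show ?thesis
    using assms(1) by (simp add: PV_const)
qed

lemma PV_diff: "PV P s a (\<lambda>x. f x - h x) = PV P s a f - PV P s a h"
  by (simp add: PV_def right_diff_distrib sum_subtractf)

lemma state_dist_is_distr:
  assumes mdp: "finite_mdp P r g" and policy: "stationary_policy \<pi>"
  shows "is_distr (state_dist P \<pi> s0 n)"
proof (induction n)
  case 0
  then show ?case by (simp add: is_distr_def)
next
  case (Suc n)
  have P_distr: "\<And>s a. is_distr (P s a)" using mdp by (simp add: finite_mdp_def)
  have \<pi>_distr: "\<And>s. is_distr (\<pi> s)" using policy by (simp add: stationary_policy_def)
  have "(\<Sum>s'\<in>UNIV. state_dist P \<pi> s0 (Suc n) s')
      = (\<Sum>s\<in>UNIV. \<Sum>a\<in>UNIV. state_dist P \<pi> s0 n s * \<pi> s a * (\<Sum>s'\<in>UNIV. P s a s'))"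
    by (simp add: sum_distrib_left) (subst sum.swap, subst sum.swap, simp add: mult.assoc)
  also have "\<dots> = (\<Sum>s\<in>UNIV. state_dist P \<pi> s0 n s * (\<Sum>a\<in>UNIV. \<pi> s a))"
    using P_distr by (simp add: is_distr_def sum_distrib_left)
  also have "\<dots> = 1"
    using \<pi>_distr Suc by (simp add: is_distr_def)
  finally show ?case
    using Suc P_distr \<pi>_distr
    by (auto simp: is_distr_def intro!: sum_nonneg mult_nonneg_nonneg)
qed

lemma sum_policy_average:
  assumes "stationary_policy \<pi>"
  shows "(\<Sum>s\<in>UNIV. \<Sum>a\<in>UNIV. d s * \<pi> s a * f s) = (\<Sum>s\<in>UNIV. d s * (f s :: real))"
proof -
  have "\<And>s. (\<Sum>a\<in>UNIV. \<pi> s a) = 1"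
    using assms by (simp add: stationary_policy_def is_distr_def)
  then show ?thesis
    by (simp add: mult.commute[of "d _"] mult.assoc flip: sum_distrib_left sum_distrib_right)
qed

lemma sum_state_dist_PV:
  "(\<Sum>s\<in>UNIV. \<Sum>a\<in>UNIV. state_dist P \<pi> s0 n s * \<pi> s a * PV P s a f)
    = (\<Sum>s'\<in>UNIV. state_dist P \<pi> s0 (Suc n) s' * f s')"
proof -
  have "(\<Sum>s\<in>UNIV. \<Sum>a\<in>UNIV. state_dist P \<pi> s0 n s * \<pi> s a * PV P s a f)
     = (\<Sum>s\<in>UNIV. \<Sum>a\<in>UNIV. \<Sum>s'\<in>UNIV. state_dist P \<pi> s0 n s * \<pi> s a * P s a s' * f s')"
    by (simp add: PV_def sum_distrib_left mult.assoc)
  also have "\<dots> = (\<Sum>s'\<in>UNIV. \<Sum>s\<in>UNIV. \<Sum>a\<in>UNIV. state_dist P \<pi> s0 n s * \<pi> s a * P s a s' * f s')"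
    by (subst sum.swap, subst (2) sum.swap) simp
  also have "\<dots> = (\<Sum>s'\<in>UNIV. state_dist P \<pi> s0 (Suc n) s' * f s')"
    by (simp add: sum_distrib_right)
  finally show ?thesis .
qed

lemma summable_discounted_bounded:
  fixes g :: real
  assumes "0 \<le> g" "g < 1" and "\<And>n. \<bar>X n\<bar> \<le> K"
  shows "summable (\<lambda>n. g ^ n * X n)"
proof (rule summable_comparison_test'[where g = "\<lambda>n. K * g ^ n" and N = 0])
  show "summable (\<lambda>n. K * g ^ n)"
    using assms by (intro summable_mult summable_geometric) auto
  show "norm (g ^ n * X n) \<le> K * g ^ n" for n
    using assms mult_left_mono[OF assms(3)[of n] zero_le_power[OF assms(1), of n]]
    by (simp add: abs_mult mult.commute)
qed

lemma state_action_weight_bounds: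
  assumes "finite_mdp P r g" and "stationary_policy \<pi>"
  shows "0 \<le> state_dist P \<pi> s0 n s * \<pi> s a" and "state_dist P \<pi> s0 n s * \<pi> s a \<le> 1"
proof -
  have "is_distr (state_dist P \<pi> s0 n)" and "is_distr (\<pi> s)"
    using assms state_dist_is_distr[OF assms] by (auto simp: stationary_policy_def)
  then show "0 \<le> state_dist P \<pi> s0 n s * \<pi> s a" and "state_dist P \<pi> s0 n s * \<pi> s a \<le> 1"
    by (auto simp: is_distr_def is_distr_le_one mult_le_one)
qed

lemma occ_nonneg:
  assumes "finite_mdp P r g" and "stationary_policy \<pi>"
  shows "0 \<le> occ P g \<pi> s0 s a"
  using assms state_action_weight_bounds[OF assms]
  unfolding occ_def finite_mdp_def
  by (intro suminf_nonneg summable_discounted_bounded[where K = 1]) auto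

lemma occ_weighted_sum_sums:
  assumes mdp: "finite_mdp P r g" and policy: "stationary_policy \<pi>"
  shows "(\<lambda>n. g ^ n * (\<Sum>s\<in>UNIV. \<Sum>a\<in>UNIV. state_dist P \<pi> s0 n s * \<pi> s a * h s a))
           sums (\<Sum>s\<in>UNIV. \<Sum>a\<in>UNIV. occ P g \<pi> s0 s a * h s a)"
proof -
  have g: "0 \<le> g" "g < 1" using mdp by (auto simp: finite_mdp_def)
  have "(\<lambda>n. g ^ n * (state_dist P \<pi> s0 n s * \<pi> s a)) sums occ P g \<pi> s0 s a" for s a
    unfolding occ_def using state_action_weight_bounds[OF mdp policy]
    by (intro summable_sums summable_discounted_bounded[OF g, where K = 1]) auto
  then have "(\<lambda>n. \<Sum>s\<in>UNIV. \<Sum>a\<in>UNIV. g ^ n * (state_dist P \<pi> s0 n s * \<pi> s a) * h s a)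
      sums (\<Sum>s\<in>UNIV. \<Sum>a\<in>UNIV. occ P g \<pi> s0 s a * h s a)"
    by (intro sums_sum sums_mult2)
  then show ?thesis
    by (simp add: sum_distrib_left mult.assoc)
qed

lemma Vpi_eq_occ_reward:
  assumes "finite_mdp P r g" and "stationary_policy \<pi>"
  shows "Vpi P r g \<pi> s0 = (\<Sum>s\<in>UNIV. \<Sum>a\<in>UNIV. occ P g \<pi> s0 s a * r s a)"
  using occ_weighted_sum_sums[OF assms] unfolding Vpi_def by (simp add: sums_iff)

text \<open>The expectations \<open>c\<^sub>n = \<Sum>\<^sub>s Pr[s\<^sub>n\<^sub>+\<^sub>1 = s] f(s)\<close> make the discounted series telescope,
  \<open>\<gamma>\<^sup>n (c\<^sub>n - \<gamma> c\<^sub>n\<^sub>+\<^sub>1) = \<gamma>\<^sup>n c\<^sub>n - \<gamma>\<^sup>n\<^sup>+\<^sup>1 c\<^sub>n\<^sub>+\<^sub>1\<close>.\<close>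
lemma occ_flow:
  assumes mdp: "finite_mdp P r g" and policy: "stationary_policy \<pi>"
  shows "(\<Sum>s\<in>UNIV. \<Sum>a\<in>UNIV. occ P g \<pi> s0 s a * (f s - g * PV P s a f)) = f s0"
proof -
  have g: "0 \<le> g" "g < 1" using mdp by (auto simp: finite_mdp_def)
  define c where "c n = (\<Sum>s\<in>UNIV. state_dist P \<pi> s0 n s * f s)" for n
  have step: "(\<Sum>s\<in>UNIV. \<Sum>a\<in>UNIV. state_dist P \<pi> s0 n s * \<pi> s a * (f s - g * PV P s a f))
      = c n - g * c (Suc n)" for n
  proof -
    have "(\<Sum>s\<in>UNIV. \<Sum>a\<in>UNIV. state_dist P \<pi> s0 n s * \<pi> s a * (f s - g * PV P s a f))
        = (\<Sum>s\<in>UNIV. \<Sum>a\<in>UNIV. state_dist P \<pi> s0 n s * \<pi> s a * f s)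
          - g * (\<Sum>s\<in>UNIV. \<Sum>a\<in>UNIV. state_dist P \<pi> s0 n s * \<pi> s a * PV P s a f)"
      by (simp add: right_diff_distrib sum_subtractf sum_distrib_left mult.left_commute)
    then show ?thesis
      by (simp only: sum_policy_average[OF policy] sum_state_dist_PV c_def)
  qed
  have "\<bar>c n\<bar> \<le> (\<Sum>s\<in>UNIV. \<bar>f s\<bar>)" for n
  proof -
    have "\<bar>c n\<bar> \<le> (\<Sum>s\<in>UNIV. \<bar>state_dist P \<pi> s0 n s * f s\<bar>)"
      unfolding c_def by (rule sum_abs)
    also have "\<dots> \<le> (\<Sum>s\<in>UNIV. \<bar>f s\<bar>)"
      using state_dist_is_distr[OF mdp policy]
      by (intro sum_mono) (auto simp: abs_mult is_distr_def is_distr_le_one mult_left_le_one_le)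
    finally show ?thesis .
  qed
  then have "(\<lambda>n. g ^ n * c n) \<longlonglongrightarrow> 0"
    by (intro summable_LIMSEQ_zero summable_discounted_bounded[OF g])
  then have "(\<lambda>n. g ^ n * c n - g ^ Suc n * c (Suc n)) sums (g ^ 0 * c 0 - 0)"
    by (rule telescope_sums')
  moreover have "c 0 = f s0"
    by (simp add: c_def if_distrib[of "\<lambda>x. x * _"] cong: if_cong)
  ultimately have "(\<lambda>n. g ^ n * (c n - g * c (Suc n))) sums f s0"
    by (simp add: algebra_simps)
  then show ?thesis
    unfolding step[symmetric]
    by (rule sums_unique2[OF occ_weighted_sum_sums[OF mdp policy]])
qed

lemma occ_total_mass:
  assumes mdp: "finite_mdp P r g" and policy: "stationary_policy \<pi>"
  shows "(1 - g) * (\<Sum>s\<in>UNIV. \<Sum>a\<in>UNIV. occ P g \<pi> s0 s a) = 1"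
proof -
  have "\<And>s a. PV P s a (\<lambda>_. 1) = 1"
    using mdp by (simp add: finite_mdp_def PV_const)
  then show ?thesis
    using occ_flow[OF mdp policy, where f = "\<lambda>_. 1"] by (simp add: sum_distrib_left mult.commute)
qed

lemma occ_drift_le:
  assumes mdp: "finite_mdp P r g" and policy: "stationary_policy \<pi>"
    and f_le: "\<And>x. f x \<le> c"
  shows "(\<Sum>s\<in>UNIV. \<Sum>a\<in>UNIV. occ P g \<pi> s0 s a * (PV P s a f - f s)) \<le> c - f s0"
proof -
  have P_distr: "\<And>s a. is_distr (P s a)" and g: "0 \<le> g" "g < 1"
    using mdp by (auto simp: finite_mdp_def)
  have "(\<Sum>s\<in>UNIV. \<Sum>a\<in>UNIV. occ P g \<pi> s0 s a * (PV P s a f - f s))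
      = (\<Sum>s\<in>UNIV. \<Sum>a\<in>UNIV. occ P g \<pi> s0 s a * ((1 - g) * PV P s a f))
        - (\<Sum>s\<in>UNIV. \<Sum>a\<in>UNIV. occ P g \<pi> s0 s a * (f s - g * PV P s a f))"
    by (simp add: algebra_simps sum_subtractf)
  also have "\<dots> \<le> (\<Sum>s\<in>UNIV. \<Sum>a\<in>UNIV. occ P g \<pi> s0 s a * ((1 - g) * c)) - f s0"
    unfolding occ_flow[OF mdp policy]
    using occ_nonneg[OF mdp policy] PV_le_bound[OF P_distr f_le] g
    by (intro diff_right_mono sum_mono mult_left_mono) auto
  also have "\<dots> = c * ((1 - g) * (\<Sum>s\<in>UNIV. \<Sum>a\<in>UNIV. occ P g \<pi> s0 s a)) - f s0"
    by (simp add: sum_distrib_left mult_ac)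
  also have "\<dots> = c - f s0"
    using occ_total_mass[OF mdp policy] by simp
  finally show ?thesis .
qed

lemma Var_le_drift_plus_Bellman_residual:
  assumes P_distr: "is_distr (P s a)" and g: "0 \<le> g" "g \<le> 1"
    and D_nonneg: "\<And>x. 0 \<le> U x - U' x" and D_le: "\<And>x. U x - U' x \<le> \<theta>"
    and U_bell: "r s a + g * PV P s a U \<le> U s"
    and U'_bell: "r s a + g * PV P s a U' \<le> U' s"
  shows "Var (P s a) (\<lambda>x. U x - U' x)
     \<le> (PV P s a (\<lambda>x. (U x - U' x)\<^sup>2) - (U s - U' s)\<^sup>2) + 2 * \<theta> * (U s - r s a - g * PV P s a U)"
proof -
  define D where "D x = U x - U' x" for x
  define m where "m = PV P s a D"
  have \<theta>_nonneg: "0 \<le> \<theta>" using D_nonneg D_le by (meson order.trans)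
  have m_nonneg: "0 \<le> m"
    unfolding m_def using PV_nonneg[of P s a D] P_distr D_nonneg by (simp add: D_def)
  have m_le: "m \<le> \<theta>"
    unfolding m_def using PV_le_bound[of P s a D] P_distr D_le by (simp add: D_def)
  have var: "Var (P s a) D = PV P s a (\<lambda>x. (D x)\<^sup>2) - m\<^sup>2"
    unfolding Var_def PV_def m_def by simp
  have gm_le: "g * m \<le> m" using g m_nonneg by (simp add: mult_left_le_one_le)
  have residual: "D s - g * m \<le> U s - r s a - g * PV P s a U"
    using U'_bell unfolding D_def m_def PV_diff by (simp add: right_diff_distrib)
  have "(D s)\<^sup>2 - m\<^sup>2 \<le> 2 * \<theta> * (U s - r s a - g * PV P s a U)"
  proof (cases "D s \<le> m")
    case True
    then have "(D s)\<^sup>2 - m\<^sup>2 \<le> 0" using D_nonneg by (simp add: D_def power_mono)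
    also have "0 \<le> 2 * \<theta> * (U s - r s a - g * PV P s a U)"
      using \<theta>_nonneg U_bell by simp
    finally show ?thesis .
  next
    case False
    have "(D s)\<^sup>2 - m\<^sup>2 = (D s - m) * (D s + m)" by (simp add: power2_eq_square algebra_simps)
    also have "\<dots> \<le> (D s - g * m) * (2 * \<theta>)"
      using False m_nonneg m_le D_le[of s] gm_le by (intro mult_mono) (auto simp: D_def)
    also have "\<dots> \<le> (U s - r s a - g * PV P s a U) * (2 * \<theta>)"
      using residual \<theta>_nonneg by (intro mult_right_mono) auto
    finally show ?thesis by (simp add: mult_ac)
  qed
  then show ?thesis using var unfolding D_def by simp
qed

theorem mainTheorem6:
  fixes P :: "'s::finite \<Rightarrow> 'a::finite \<Rightarrow> 's \<Rightarrow> real"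
    and r :: "'s \<Rightarrow> 'a \<Rightarrow> real" and g :: real
    and U U' :: "'s \<Rightarrow> real" and \<pi> :: "'s \<Rightarrow> 'a \<Rightarrow> real" and s0 :: 's and \<theta> :: real
  assumes mdp: "finite_mdp P r g"
    and UU': "\<forall>s. U s \<ge> U' s"
    and U'V: "\<forall>s. U' s \<ge> Vstar P r g s"
    and U_bell: "\<forall>s a. U s \<ge> r s a + g * PV P s a U"
    and U'_bell: "\<forall>s a. U' s \<ge> r s a + g * PV P s a U'"
    and theta: "\<theta> = Max (range (\<lambda>s. \<bar>U s - Vstar P r g s\<bar>))"
    and policy: "stationary_policy \<pi>"
  shows "(\<Sum>s\<in>UNIV. \<Sum>a\<in>UNIV. occ P g \<pi> s0 s a * Var (P s a) (\<lambda>x. U x - U' x))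
           \<le> 4 * \<theta>^2 + 2 * \<theta> * (Vstar P r g s0 - Vpi P r g \<pi> s0)"
proof -
  let ?occ = "occ P g \<pi> s0" and ?D = "\<lambda>x. U x - U' x"
  have P_distr: "\<And>s a. is_distr (P s a)" and g: "0 \<le> g" "g \<le> 1"
    using mdp by (auto simp: finite_mdp_def)
  have U_le: "U x \<le> \<theta> + Vstar P r g x" for x
  proof -
    have "\<bar>U x - Vstar P r g x\<bar> \<le> \<theta>" unfolding theta by (rule Max_ge) auto
    then show ?thesis by linarith
  qed
  have D_nonneg: "\<And>x. 0 \<le> ?D x" and D_le: "\<And>x. ?D x \<le> \<theta>"
    using UU' U'V U_le by (auto simp: algebra_simps intro: order.trans[OF _ add_left_mono])
  have "(\<Sum>s\<in>UNIV. \<Sum>a\<in>UNIV. ?occ s a * Var (P s a) ?D)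
      \<le> (\<Sum>s\<in>UNIV. \<Sum>a\<in>UNIV. ?occ s a * ((PV P s a (\<lambda>x. (?D x)\<^sup>2) - (?D s)\<^sup>2)
            + 2 * \<theta> * (U s - r s a - g * PV P s a U)))"
    using occ_nonneg[OF mdp policy] U_bell U'_bell
    by (intro sum_mono mult_left_mono Var_le_drift_plus_Bellman_residual[OF P_distr g D_nonneg D_le])
       auto
  also have "\<dots> = (\<Sum>s\<in>UNIV. \<Sum>a\<in>UNIV. ?occ s a * (PV P s a (\<lambda>x. (?D x)\<^sup>2) - (?D s)\<^sup>2))
      + 2 * \<theta> * ((\<Sum>s\<in>UNIV. \<Sum>a\<in>UNIV. ?occ s a * (U s - g * PV P s a U))
                   - (\<Sum>s\<in>UNIV. \<Sum>a\<in>UNIV. ?occ s a * r s a))"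
    by (simp add: algebra_simps sum.distrib sum_subtractf sum_distrib_left)
  also have "\<dots> \<le> \<theta>\<^sup>2 - (?D s0)\<^sup>2 + 2 * \<theta> * (U s0 - Vpi P r g \<pi> s0)"
    unfolding occ_flow[OF mdp policy] Vpi_eq_occ_reward[OF mdp policy]
    using D_nonneg D_le by (intro add_right_mono occ_drift_le[OF mdp policy]) (auto intro: power_mono)
  also have "\<dots> \<le> 4 * \<theta>\<^sup>2 + 2 * \<theta> * (Vstar P r g s0 - Vpi P r g \<pi> s0)"
  proof -
    have "\<theta> * U s0 \<le> \<theta> * (\<theta> + Vstar P r g s0)"
      using D_nonneg[of s0] D_le[of s0] by (intro mult_left_mono[OF U_le]) auto
    then show ?thesis
      using zero_le_power2[of "?D s0"] zero_le_square[of \<theta>]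
      by (simp only: right_diff_distrib distrib_left mult.assoc power2_eq_square)
  qed
  finally show ?thesis .
qed

end
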